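(* Let $m\in\mathbb{N}$, $d_1,\dots,d_m\in\mathbb{R}$, $\alpha_1,\dots,\alpha_m>0$, $\beta>0$, $\nu\in\mathbb{R}$, and let $G(\gamma)=\sum_{i=1}^{m}\frac{d_i\Gamma(1+\gamma)}{\Gamma(1+\gamma-\alpha_i)}$. Let $\gamma>-1$ be a root of multiplicity two of $G(\gamma)=\nu^2$ (i.e. $G(\gamma)=\nu^2$, $G'(\gamma)=0$, $G''(\gamma)\neq0$), and suppose there is no positive integer $n$ such that $\gamma+\beta n$ is another root of $G=\nu^2$. For $n\ge1$ set $$A_n=\sum_{i=1}^{m}\frac{d_i\Gamma(1+\gamma+\beta n)}{\Gamma(1+\gamma+\beta n-\alpha_i)},\qquad B_n=\sum_{i=1}^{m}\frac{d_i\Gamma(1+\gamma+\beta n)}{\Gamma(1+\gamma+\beta n-\alpha_i)}\big[\psi(1+\gamma+\beta n)-\psi(1+\gamma+\beta n-\alpha_i)\big],$$ let $c_0^1,c_0^2$ be arbitrary constants and define recursively for $n\ge0$ $$c_{n+1}^1=-\frac{c_n^1}{A_{n+1}-\nu^2},\qquad c_{n+1}^2=-\frac{c_n^2+c_{n+1}^1B_{n+1}}{A_{n+1}-\nu^2}.$$ Then the series $$u(x)=\ln x\sum_{n=0}^{\infty}c_n^1x^{\gamma+\beta n}+\sum_{n=0}^{\infty}c_n^2x^{\gamma+\beta n}$$ converges pointwise for every $x>0$.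
   Context: $\psi=\Gamma'/\Gamma$ is the digamma function. Quotients of Gamma functions are understood with $1/\Gamma$ entire. This series is the candidate second (logarithmic) solution of $\sum_{i=1}^{m}d_i x^{\alpha_i}D^{\alpha_i}u(x)+(x^\beta-\nu^2)u(x)=0$ with Caputo derivatives $D^{\alpha}$, associated with a double root of the characteristic equation. *)

theory Defs
  imports "HOL-Analysis.Analysis"
begin

definition Gsum :: "nat \<Rightarrow> (nat \<Rightarrow> real) \<Rightarrow> (nat \<Rightarrow> real) \<Rightarrow> real \<Rightarrow> real" where
  "Gsum m d \<alpha> g = (\<Sum>i=1..m. d i * Gamma (1 + g) * rGamma (1 + g - \<alpha> i))"

text \<open>B-type sum: d_i Gamma(a)/Gamma(b) [psi(a) - psi(b)] with a = 1+g, b = 1+g-alpha_i.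
  The product -psi(b)/Gamma(b) is read as its entire continuation deriv rGamma b
  (since rGamma' = - rGamma * Digamma).\<close>
definition Bsum :: "nat \<Rightarrow> (nat \<Rightarrow> real) \<Rightarrow> (nat \<Rightarrow> real) \<Rightarrow> real \<Rightarrow> real" where
  "Bsum m d \<alpha> g = (\<Sum>i=1..m. d i * Gamma (1 + g) *
      (Digamma (1 + g) * rGamma (1 + g - \<alpha> i) + deriv rGamma (1 + g - \<alpha> i)))"

end

(*
  Group the terms of G by equal exponents and let a be the largest exponent whose
  total coefficient C is nonzero. Since Gamma(x)/Gamma(x+s) -> 0 for s > 0, the
  quotients Gamma(1+y)/Gamma(1+y-alpha) are ordered by alpha at infinity, so
  G(y) - nu^2 ~ C Gamma(1+y)/Gamma(1+y-a), which tends to infinity. The B-sum is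
  O(Gamma(1+y)/Gamma(1+y-a)) as well, because psi(1+y) - psi(1+y-alpha) <= alpha + 1.
  Hence the denominators A_n - nu^2 of both recursions grow without bound while
  B_n/(A_n - nu^2) stays bounded; so |c_n| q^n is eventually dominated by a
  contraction plus a summable term for every q > 0, and both series in x^beta
  have infinite radius of convergence.
*)

theory Submission
  imports Defs "HOL-Library.Landau_Symbols" "HOL-Real_Asymp.Real_Asymp"
begin

lemma Digamma_ge_ln:
  assumes "(x::real) \<ge> 2"
  shows "ln (x - 1) - euler_mascheroni \<le> Digamma x"
proof -
  define n where "n = nat \<lfloor>x\<rfloor> - 1"
  have n: "real (Suc n) = of_int \<lfloor>x\<rfloor>"
    using assms unfolding n_def by simp
  have "ln (x - 1) \<le> ln (real n + 1)"
    using n assms by (subst ln_le_cancel_iff) (auto, linarith)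
  also have "\<dots> \<le> harm n" by (rule harm_ge_ln)
  also have "harm n = Digamma (real (Suc n)) + euler_mascheroni"
    unfolding Digamma_of_nat by simp
  also have "Digamma (real (Suc n)) \<le> Digamma x"
    by (rule Digamma_real_mono) (simp, use n of_int_floor_le[of x] in linarith)
  finally show ?thesis by simp
qed

lemma filterlim_Digamma_at_top: "filterlim (Digamma :: real \<Rightarrow> real) at_top at_top"
proof (rule filterlim_at_top_mono[of "\<lambda>x. ln (x - 1) - euler_mascheroni"])
  show "filterlim (\<lambda>x::real. ln (x - 1) - euler_mascheroni) at_top at_top" by real_asymp
  show "eventually (\<lambda>x::real. ln (x - 1) - euler_mascheroni \<le> Digamma x) at_top"
    using eventually_ge_at_top[of "2::real"] by (rule eventually_mono) (rule Digamma_ge_ln)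
qed

lemma Gamma_quotient_le_exp_Digamma:
  assumes "(x::real) > 0" "s > 0"
  shows "Gamma x / Gamma (x + s) \<le> exp (- s * Digamma x)"
proof -
  have "\<exists>\<xi>. x < \<xi> \<and> \<xi> < x + s \<and> ln_Gamma (x + s) - ln_Gamma x = (x + s - x) * Digamma \<xi>"
    using assms by (intro MVT2 derivative_intros impI allI) auto
  then obtain \<xi> where \<xi>: "x < \<xi>" "\<xi> < x + s"
    and mvt: "ln_Gamma (x + s) - ln_Gamma x = (x + s - x) * Digamma \<xi>" by blast
  have "Digamma x \<le> Digamma \<xi>" using \<xi> assms by (intro Digamma_real_mono) auto
  hence "s * Digamma x \<le> ln_Gamma (x + s) - ln_Gamma x" using mvt assms by simp
  moreover have "Gamma x / Gamma (x + s) = exp (ln_Gamma x - ln_Gamma (x + s))"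
    using assms by (simp add: Gamma_real_pos_exp exp_diff)
  ultimately show ?thesis by simp
qed

lemma tendsto_Gamma_quotient_0:
  assumes "s > (0::real)"
  shows "((\<lambda>x. Gamma x / Gamma (x + s)) \<longlongrightarrow> 0) at_top"
proof (rule tendsto_sandwich[of "\<lambda>_. 0" _ _ "\<lambda>x. exp (- s * Digamma x)"])
  show "eventually (\<lambda>x. 0 \<le> Gamma x / Gamma (x + s)) at_top"
    using eventually_gt_at_top[of 0] by eventually_elim (use assms in auto)
  show "eventually (\<lambda>x. Gamma x / Gamma (x + s) \<le> exp (- s * Digamma x)) at_top"
    using eventually_gt_at_top[of 0]
    by eventually_elim (use assms Gamma_quotient_le_exp_Digamma in auto)
  have "filterlim (\<lambda>x. s * Digamma x) at_top at_top"
    using assms by (intro filterlim_tendsto_pos_mult_at_top[OF tendsto_const] filterlim_Digamma_at_top)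
  hence "((\<lambda>x. exp (- (s * Digamma x))) \<longlongrightarrow> 0) at_top"
    by (intro filterlim_compose[OF exp_at_bot]) (simp add: filterlim_uminus_at_top)
  thus "((\<lambda>x. exp (- s * Digamma x)) \<longlongrightarrow> 0) at_top" by simp
qed simp

lemma Digamma_add_nat_le:
  assumes "(x::real) \<ge> 1"
  shows "Digamma (x + real N) \<le> Digamma x + real N"
proof (induction N)
  case (Suc N)
  have "Digamma (x + real (Suc N)) = Digamma (x + real N) + 1 / (x + real N)"
    using assms Digamma_plus1[of "x + real N"] by (simp add: add_ac)
  also have "1 / (x + real N) \<le> 1" using assms by simp
  finally show ?case using Suc by simp
qed simp

lemma Digamma_add_le:
  assumes "(x::real) \<ge> 1" "a \<ge> 0"
  shows "Digamma (x + a) \<le> Digamma x + a + 1"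
proof -
  have "Digamma (x + a) \<le> Digamma (x + real (nat \<lceil>a\<rceil>))"
    using assms real_nat_ceiling_ge[of a] by (intro Digamma_real_mono) auto
  also have "\<dots> \<le> Digamma x + real (nat \<lceil>a\<rceil>)" by (rule Digamma_add_nat_le[OF assms(1)])
  also have "real (nat \<lceil>a\<rceil>) \<le> a + 1" using assms(2) by linarith
  finally show ?thesis by simp
qed

definition Gamma_ratio :: "real \<Rightarrow> real \<Rightarrow> real" where
  "Gamma_ratio a y = Gamma (1 + y) * rGamma (1 + y - a)"

definition Gamma_ratio_psi :: "real \<Rightarrow> real \<Rightarrow> real" where
  "Gamma_ratio_psi a y = Gamma_ratio a y * (Digamma (1 + y) - Digamma (1 + y - a))"

lemma Gamma_ratio_eq: "a - 1 < y \<Longrightarrow> Gamma_ratio a y = Gamma (1 + y) / Gamma (1 + y - a)"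
  by (simp add: Gamma_ratio_def rGamma_inverse_Gamma divide_inverse)

lemma Gamma_ratio_pos: "0 \<le> a \<Longrightarrow> a - 1 < y \<Longrightarrow> 0 < Gamma_ratio a y"
  by (simp add: Gamma_ratio_eq)

lemma eventually_Gamma_ratio_pos: "0 \<le> a \<Longrightarrow> eventually (\<lambda>y. 0 < Gamma_ratio a y) at_top"
  using eventually_gt_at_top[of a] by eventually_elim (simp add: Gamma_ratio_pos)

lemma filterlim_Gamma_ratio_at_top:
  assumes "a > 0"
  shows "filterlim (Gamma_ratio a) at_top at_top"
proof -
  have "filterlim (\<lambda>y::real. 1 + y - a) at_top at_top" by real_asymp
  from filterlim_compose[OF tendsto_Gamma_quotient_0[OF assms] this]
  have "((\<lambda>y. inverse (Gamma_ratio a y)) \<longlongrightarrow> 0) at_top"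
    by (rule Lim_transform_eventually)
       (use eventually_gt_at_top[of a] in \<open>eventually_elim, simp add: Gamma_ratio_eq\<close>)
  moreover have "eventually (\<lambda>y. 0 < inverse (Gamma_ratio a y)) at_top"
    using eventually_Gamma_ratio_pos[of a] assms by simp
  ultimately show ?thesis
    using filterlim_inverse_at_top[of "\<lambda>y. inverse (Gamma_ratio a y)"] by simp
qed

lemma Gamma_ratio_smallo:
  assumes "0 < a" "a < b"
  shows "Gamma_ratio a \<in> o(Gamma_ratio b)"
proof (rule smalloI_tendsto)
  have "filterlim (\<lambda>y::real. 1 + y - b) at_top at_top" by real_asymp
  moreover have "0 < b - a" using assms by simp
  ultimately have "((\<lambda>y. Gamma (1 + y - b) / Gamma (1 + y - b + (b - a))) \<longlongrightarrow> 0) at_top"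
    by (intro filterlim_compose[OF tendsto_Gamma_quotient_0])
  moreover have "eventually (\<lambda>y. Gamma (1 + y - b) / Gamma (1 + y - b + (b - a))
      = Gamma_ratio a y / Gamma_ratio b y) at_top"
    using eventually_gt_at_top[of b]
  proof eventually_elim
    case (elim y)
    then have "Gamma (1 + y) > 0" "Gamma (1 + y - a) > 0" "Gamma (1 + y - b) > 0"
      using assms by auto
    then show ?case
      using elim assms by (simp add: Gamma_ratio_eq field_simps del: Gamma_real_pos)
  qed
  ultimately show "((\<lambda>y. Gamma_ratio a y / Gamma_ratio b y) \<longlongrightarrow> 0) at_top"
    by (rule Lim_transform_eventually)
  show "eventually (\<lambda>y. Gamma_ratio b y \<noteq> 0) at_top"
    using eventually_Gamma_ratio_pos[of b] assms by (auto elim: eventually_mono)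
qed

lemma Gamma_ratio_psi_bigo:
  assumes "a \<ge> 0"
  shows "Gamma_ratio_psi a \<in> O(Gamma_ratio a)"
proof (rule bigoI)
  show "eventually (\<lambda>y. norm (Gamma_ratio_psi a y) \<le> (a + 1) * norm (Gamma_ratio a y)) at_top"
    using eventually_ge_at_top[of a]
  proof eventually_elim
    case (elim y)
    have "Digamma (1 + y - a) \<le> Digamma (1 + y)"
      using elim assms by (intro Digamma_real_mono) auto
    moreover have "Digamma (1 + y - a + a) \<le> Digamma (1 + y - a) + a + 1"
      using elim assms by (intro Digamma_add_le) auto
    ultimately show ?case
      using Gamma_ratio_pos[of a y] elim assms
      by (simp add: Gamma_ratio_psi_def abs_mult mult_right_mono)
  qed
qed

text \<open>Terms with equal exponents \<open>\<alpha> i\<close> may cancel, so the asymptotics are read off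
  after grouping by exponent.\<close>

definition exponent_coeff :: "nat \<Rightarrow> (nat \<Rightarrow> real) \<Rightarrow> (nat \<Rightarrow> real) \<Rightarrow> real \<Rightarrow> real" where
  "exponent_coeff m d \<alpha> a = sum d {i \<in> {1..m}. \<alpha> i = a}"

definition exponents :: "nat \<Rightarrow> (nat \<Rightarrow> real) \<Rightarrow> (nat \<Rightarrow> real) \<Rightarrow> real set" where
  "exponents m d \<alpha> = {a \<in> \<alpha> ` {1..m}. exponent_coeff m d \<alpha> a \<noteq> 0}"

lemma finite_exponents [simp]: "finite (exponents m d \<alpha>)"
  by (simp add: exponents_def)

lemma sum_by_exponents:
  "(\<Sum>i=1..m. d i * h (\<alpha> i)) = (\<Sum>a\<in>exponents m d \<alpha>. exponent_coeff m d \<alpha> a * h a)"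
proof -
  have "(\<Sum>i=1..m. d i * h (\<alpha> i)) = (\<Sum>a\<in>\<alpha> ` {1..m}. \<Sum>i\<in>{i \<in> {1..m}. \<alpha> i = a}. d i * h (\<alpha> i))"
    by (rule sum.group[symmetric]) auto
  also have "\<dots> = (\<Sum>a\<in>\<alpha> ` {1..m}. exponent_coeff m d \<alpha> a * h a)"
    unfolding exponent_coeff_def sum_distrib_right by (intro sum.cong refl) auto
  also have "\<dots> = (\<Sum>a\<in>exponents m d \<alpha>. exponent_coeff m d \<alpha> a * h a)"
    unfolding exponents_def by (rule sum.mono_neutral_right) auto
  finally show ?thesis .
qed

lemma Gsum_by_exponents:
  "Gsum m d \<alpha> y = (\<Sum>a\<in>exponents m d \<alpha>. exponent_coeff m d \<alpha> a * Gamma_ratio a y)"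
  unfolding Gsum_def Gamma_ratio_def mult.assoc by (rule sum_by_exponents)

lemma deriv_rGamma_pos: "(b::real) > 0 \<Longrightarrow> deriv rGamma b = - rGamma b * Digamma b"
  by (rule DERIV_imp_deriv, rule has_field_derivative_rGamma_no_nonpos_int)
     (auto elim!: nonpos_Ints_cases)

lemma Bsum_by_exponents:
  assumes "\<forall>i\<in>{1..m}. \<alpha> i - 1 < y"
  shows "Bsum m d \<alpha> y = (\<Sum>a\<in>exponents m d \<alpha>. exponent_coeff m d \<alpha> a * Gamma_ratio_psi a y)"
proof -
  have "Bsum m d \<alpha> y = (\<Sum>i=1..m. d i * Gamma_ratio_psi (\<alpha> i) y)"
    unfolding Bsum_def using assms
    by (intro sum.cong refl)
       (auto simp: deriv_rGamma_pos Gamma_ratio_psi_def Gamma_ratio_def algebra_simps)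
  thus ?thesis using sum_by_exponents[of d "\<lambda>a. Gamma_ratio_psi a y"] by simp
qed

lemma Gamma_ratio_sum_asymp_equiv:
  fixes S :: "real set" and D :: "real \<Rightarrow> real"
  assumes S: "finite S" "S \<noteq> {}" "\<forall>a\<in>S. 0 < a" and D: "D (Max S) \<noteq> 0"
  shows "(\<lambda>y. (\<Sum>a\<in>S. D a * Gamma_ratio a y) - c) \<sim>[at_top] (\<lambda>y. D (Max S) * Gamma_ratio (Max S) y)"
proof -
  define M where "M = Max S"
  have M: "M \<in> S" "0 < M" using S unfolding M_def by auto
  have "(\<lambda>y. \<Sum>a\<in>S - {M}. D a * Gamma_ratio a y) \<in> o(Gamma_ratio M)"
  proof (rule big_sum_in_smallo)
    fix a assume "a \<in> S - {M}"
    hence "0 < a" "a < M" using S M_def by (auto simp: order.not_eq_order_implies_strict)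
    thus "(\<lambda>y. D a * Gamma_ratio a y) \<in> o(Gamma_ratio M)"
      by (simp add: Gamma_ratio_smallo)
  qed
  moreover have "(\<lambda>_. c) \<in> o(Gamma_ratio M)"
  proof (rule smalloI_tendsto)
    show "((\<lambda>y. c / Gamma_ratio M y) \<longlongrightarrow> 0) at_top"
      using filterlim_Gamma_ratio_at_top[OF M(2)]
      by (intro tendsto_divide_0[OF tendsto_const] filterlim_at_top_imp_at_infinity)
    show "eventually (\<lambda>y. Gamma_ratio M y \<noteq> 0) at_top"
      using eventually_Gamma_ratio_pos[of M] M by (auto elim: eventually_mono)
  qed
  ultimately have "(\<lambda>y. (\<Sum>a\<in>S - {M}. D a * Gamma_ratio a y) - c) \<in> o(\<lambda>y. D M * Gamma_ratio M y)"
    using D M_def by (simp add: sum_in_smallo)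
  moreover have "(\<lambda>y. (\<Sum>a\<in>S. D a * Gamma_ratio a y) - c)
      = (\<lambda>y. D M * Gamma_ratio M y + ((\<Sum>a\<in>S - {M}. D a * Gamma_ratio a y) - c))"
    using S M by (simp add: sum.remove add_diff_eq)
  ultimately show ?thesis
    unfolding M_def[symmetric] by (simp add: asymp_equiv_add_right)
qed

lemma Gamma_ratio_psi_sum_bigo:
  fixes S :: "real set" and D :: "real \<Rightarrow> real"
  assumes "finite S" "\<forall>a\<in>S. 0 < a"
  shows "(\<lambda>y. \<Sum>a\<in>S. D a * Gamma_ratio_psi a y) \<in> O(Gamma_ratio (Max S))"
proof (rule big_sum_in_bigo)
  fix a assume a: "a \<in> S"
  have "Gamma_ratio a \<in> O(Gamma_ratio (Max S))"
  proof (cases "a = Max S")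
    case False
    with a assms have "a < Max S" by (simp add: order.not_eq_order_implies_strict)
    with a assms show ?thesis by (intro landau_o.small_imp_big Gamma_ratio_smallo) auto
  qed simp
  moreover have "Gamma_ratio_psi a \<in> O(Gamma_ratio a)"
    using a assms by (intro Gamma_ratio_psi_bigo) auto
  ultimately show "(\<lambda>y. D a * Gamma_ratio_psi a y) \<in> O(Gamma_ratio (Max S))"
    by (simp add: landau_o.big_trans)
qed

definition leading_exponent :: "nat \<Rightarrow> (nat \<Rightarrow> real) \<Rightarrow> (nat \<Rightarrow> real) \<Rightarrow> real" where
  "leading_exponent m d \<alpha> = Max (exponents m d \<alpha>)"

definition leading_coeff :: "nat \<Rightarrow> (nat \<Rightarrow> real) \<Rightarrow> (nat \<Rightarrow> real) \<Rightarrow> real" where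
  "leading_coeff m d \<alpha> = exponent_coeff m d \<alpha> (leading_exponent m d \<alpha>)"

lemma exponents_nonempty: "Gsum m d \<alpha> \<noteq> (\<lambda>_. 0) \<Longrightarrow> exponents m d \<alpha> \<noteq> {}"
  by (auto simp: fun_eq_iff Gsum_by_exponents)

lemma leading_exponent_mem: "Gsum m d \<alpha> \<noteq> (\<lambda>_. 0) \<Longrightarrow> leading_exponent m d \<alpha> \<in> exponents m d \<alpha>"
  unfolding leading_exponent_def by (simp add: exponents_nonempty)

lemma leading_exponent_pos:
  "\<forall>i\<in>{1..m}. 0 < \<alpha> i \<Longrightarrow> Gsum m d \<alpha> \<noteq> (\<lambda>_. 0) \<Longrightarrow> 0 < leading_exponent m d \<alpha>"
  using leading_exponent_mem[of m d \<alpha>] by (auto simp: exponents_def)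

lemma leading_coeff_nonzero: "Gsum m d \<alpha> \<noteq> (\<lambda>_. 0) \<Longrightarrow> leading_coeff m d \<alpha> \<noteq> 0"
  using leading_exponent_mem by (auto simp: exponents_def leading_coeff_def)

lemma Gsum_minus_const_asymp_equiv:
  assumes "\<forall>i\<in>{1..m}. 0 < \<alpha> i" "Gsum m d \<alpha> \<noteq> (\<lambda>_. 0)"
  shows "(\<lambda>y. Gsum m d \<alpha> y - c) \<sim>[at_top]
           (\<lambda>y. leading_coeff m d \<alpha> * Gamma_ratio (leading_exponent m d \<alpha>) y)"
proof -
  have "\<forall>a\<in>exponents m d \<alpha>. 0 < a" using assms(1) by (auto simp: exponents_def)
  with exponents_nonempty[OF assms(2)] leading_coeff_nonzero[OF assms(2)] show ?thesis
    unfolding Gsum_by_exponents leading_coeff_def leading_exponent_def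
    by (intro Gamma_ratio_sum_asymp_equiv finite_exponents)
qed

lemma filterlim_abs_Gsum_minus_const:
  assumes "\<forall>i\<in>{1..m}. 0 < \<alpha> i" "Gsum m d \<alpha> \<noteq> (\<lambda>_. 0)"
  shows "filterlim (\<lambda>y. \<bar>Gsum m d \<alpha> y - c\<bar>) at_top at_top"
proof -
  define L where "L = leading_exponent m d \<alpha>"
  define C where "C = leading_coeff m d \<alpha>"
  have "(\<lambda>y. C * Gamma_ratio L y) \<sim>[at_top] (\<lambda>y. Gsum m d \<alpha> y - c)"
    using asymp_equiv_symI[OF Gsum_minus_const_asymp_equiv[OF assms]] unfolding L_def C_def .
  moreover have "filterlim (\<lambda>y. C * Gamma_ratio L y) at_infinity at_top"
    using leading_exponent_pos[OF assms] leading_coeff_nonzero[OF assms(2)] unfolding L_def C_def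
    by (intro tendsto_mult_filterlim_at_infinity[OF tendsto_const]
          filterlim_at_top_imp_at_infinity filterlim_Gamma_ratio_at_top)
  ultimately have "filterlim (\<lambda>y. Gsum m d \<alpha> y - c) at_infinity at_top"
    by (rule asymp_equiv_at_infinity_transfer)
  then show ?thesis by (simp add: filterlim_at_infinity_conv_norm_at_top)
qed

lemma Bsum_bigo_Gsum_minus_const:
  assumes "\<forall>i\<in>{1..m}. 0 < \<alpha> i" "Gsum m d \<alpha> \<noteq> (\<lambda>_. 0)"
  shows "Bsum m d \<alpha> \<in> O(\<lambda>y. Gsum m d \<alpha> y - c)"
proof -
  define L where "L = leading_exponent m d \<alpha>"
  define B where "B y = (\<Sum>a\<in>exponents m d \<alpha>. exponent_coeff m d \<alpha> a * Gamma_ratio_psi a y)" for y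
  have "eventually (\<lambda>y. \<forall>i\<in>{1..m}. \<alpha> i - 1 < y) at_top"
    by (intro eventually_ball_finite ballI eventually_gt_at_top) simp
  then have "eventually (\<lambda>y. B y = Bsum m d \<alpha> y) at_top"
    by eventually_elim (simp add: B_def Bsum_by_exponents)
  moreover have "B \<in> O(Gamma_ratio L)"
    unfolding B_def L_def leading_exponent_def using assms(1)
    by (intro Gamma_ratio_psi_sum_bigo) (auto simp: exponents_def)
  ultimately have "Bsum m d \<alpha> \<in> O(Gamma_ratio L)"
    using landau_o.big.in_cong[of B "Bsum m d \<alpha>"] by blast
  moreover have "(\<lambda>y. leading_coeff m d \<alpha> * Gamma_ratio L y) \<in> O(\<lambda>y. Gsum m d \<alpha> y - c)"
    unfolding L_def
    by (rule asymp_equiv_imp_bigo[OF asymp_equiv_symI[OF Gsum_minus_const_asymp_equiv[OF assms]]])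
  then have "Gamma_ratio L \<in> O(\<lambda>y. Gsum m d \<alpha> y - c)"
    using leading_coeff_nonzero[OF assms(2)] by simp
  ultimately show ?thesis by (rule landau_o.big_trans)
qed

lemma summable_if_contraction_bound:
  fixes a b :: "nat \<Rightarrow> real"
  assumes a: "\<And>n. 0 \<le> a n" and b: "\<And>n. 0 \<le> b n" "summable b" and t: "0 \<le> t" "t < 1"
    and rec: "eventually (\<lambda>n. a (Suc n) \<le> t * a n + b n) sequentially"
  shows "summable a"
proof -
  obtain N where N: "\<And>n. n \<ge> N \<Longrightarrow> a (Suc n) \<le> t * a n + b n"
    using rec by (auto simp: eventually_sequentially)
  define Bs where "Bs = (\<Sum>k. b (k + N))"
  have bound: "(\<Sum>k<M. a (k + Suc N)) \<le> (t * a N + Bs) / (1 - t)" for M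
  proof -
    define P where "P = (\<Sum>k<M. a (k + Suc N))"
    have "P \<le> (\<Sum>k<M. t * a (k + N) + b (k + N))"
      unfolding P_def by (intro sum_mono) (use N in auto)
    also have "\<dots> = t * (\<Sum>k<M. a (k + N)) + (\<Sum>k<M. b (k + N))"
      by (simp add: sum.distrib sum_distrib_left)
    also have "(\<Sum>k<M. b (k + N)) \<le> Bs"
      unfolding Bs_def using b by (intro sum_le_suminf) auto
    also have "(\<Sum>k<M. a (k + N)) \<le> (\<Sum>k<Suc M. a (k + N))"
      by (rule sum_mono2) (use a in auto)
    also have "(\<Sum>k<Suc M. a (k + N)) = a N + P"
      unfolding P_def by (subst sum.lessThan_Suc_shift) simp
    finally have "P \<le> t * (a N + P) + Bs" using t by (simp add: mult_left_mono)
    hence "(1 - t) * P \<le> t * a N + Bs" by (simp add: algebra_simps)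
    thus ?thesis unfolding P_def[symmetric] using t by (simp add: field_simps)
  qed
  have "summable (\<lambda>k. a (k + Suc N))"
  proof (rule bounded_imp_summable)
    show "(\<Sum>k\<le>n. a (k + Suc N)) \<le> (t * a N + Bs) / (1 - t)" for n
      using bound[of "Suc n"] by (simp add: lessThan_Suc_atMost)
  qed (rule a)
  thus ?thesis by (subst summable_iff_shift[symmetric])
qed

lemma summable_power_series_of_recursion:
  fixes c b D :: "nat \<Rightarrow> real"
  assumes D: "filterlim (\<lambda>n. \<bar>D n\<bar>) at_top sequentially" and q: "0 < q"
    and b: "\<And>n. 0 \<le> b n" "summable (\<lambda>n. b n * q ^ Suc n)"
    and rec: "eventually (\<lambda>n. \<bar>c (Suc n)\<bar> \<le> \<bar>c n\<bar> / \<bar>D n\<bar> + b n) sequentially"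
  shows "summable (\<lambda>n. \<bar>c n\<bar> * q ^ n)"
proof (rule summable_if_contraction_bound[where t = "1/2"])
  have "eventually (\<lambda>n. 2 * q \<le> \<bar>D n\<bar>) sequentially"
    using D by (simp add: filterlim_at_top)
  with rec show "eventually (\<lambda>n. \<bar>c (Suc n)\<bar> * q ^ Suc n
      \<le> 1/2 * (\<bar>c n\<bar> * q ^ n) + b n * q ^ Suc n) sequentially"
  proof eventually_elim
    case (elim n)
    have "\<bar>c n\<bar> / \<bar>D n\<bar> \<le> \<bar>c n\<bar> / (2 * q)"
      using elim q by (intro divide_left_mono) auto
    with elim have "\<bar>c (Suc n)\<bar> \<le> \<bar>c n\<bar> / (2 * q) + b n" by linarith
    then have "\<bar>c (Suc n)\<bar> * q ^ Suc n \<le> (\<bar>c n\<bar> / (2 * q) + b n) * q ^ Suc n"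
      using q by (intro mult_right_mono) auto
    also have "\<dots> = 1/2 * (\<bar>c n\<bar> * q ^ n) + b n * q ^ Suc n"
      using q by (simp add: field_simps)
    finally show ?case .
  qed
qed (use q b in auto)

lemma summable_powr_series_of_abs:
  assumes "(x::real) > 0" "summable (\<lambda>n. \<bar>c n\<bar> * (x powr \<beta>) ^ n)"
  shows "summable (\<lambda>n. c n * x powr (\<gamma> + \<beta> * real n))"
proof (rule summable_rabs_cancel)
  have "\<bar>c n * x powr (\<gamma> + \<beta> * real n)\<bar> = x powr \<gamma> * (\<bar>c n\<bar> * (x powr \<beta>) ^ n)" for n
    using assms(1) by (simp add: powr_add powr_powr[symmetric] powr_realpow abs_mult mult_ac)
  then show "summable (\<lambda>n. \<bar>c n * x powr (\<gamma> + \<beta> * real n)\<bar>)"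
    using summable_mult[OF assms(2)] by simp
qed

lemma abs_add_mult_divide_le:
  fixes u v B D K :: real
  assumes "\<bar>B\<bar> \<le> K * \<bar>D\<bar>" "0 \<le> K"
  shows "\<bar>(u + v * B) / D\<bar> \<le> \<bar>u\<bar> / \<bar>D\<bar> + K * \<bar>v\<bar>"
proof (cases "D = 0")
  case False
  have "\<bar>(u + v * B) / D\<bar> \<le> (\<bar>u\<bar> + \<bar>v\<bar> * \<bar>B\<bar>) / \<bar>D\<bar>"
    unfolding abs_divide
    by (intro divide_right_mono) (auto simp: abs_mult intro: order_trans[OF abs_triangle_ineq])
  also have "\<dots> = \<bar>u\<bar> / \<bar>D\<bar> + \<bar>v\<bar> * (\<bar>B\<bar> / \<bar>D\<bar>)"
    by (simp add: add_divide_distrib)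
  also have "\<bar>v\<bar> * (\<bar>B\<bar> / \<bar>D\<bar>) \<le> \<bar>v\<bar> * K"
    using assms False by (intro mult_left_mono) (auto simp: divide_le_eq)
  finally show ?thesis by (simp add: mult.commute)
qed (use assms in simp)

theorem lemma4p1:
  fixes m :: nat and d \<alpha> :: "nat \<Rightarrow> real" and \<beta> \<nu> \<gamma> :: real
    and c1 c2 :: "nat \<Rightarrow> real"
  assumes alpha_pos: "\<forall>i\<in>{1..m}. \<alpha> i > 0"
    and beta_pos: "\<beta> > 0"
    and gamma_gt: "\<gamma> > -1"
    and root: "Gsum m d \<alpha> \<gamma> = \<nu>\<^sup>2"
    and d1: "deriv (Gsum m d \<alpha>) \<gamma> = 0"
    and d2: "deriv (deriv (Gsum m d \<alpha>)) \<gamma> \<noteq> 0"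
    and no_shift_root: "\<forall>n::nat. n \<ge> 1 \<longrightarrow> Gsum m d \<alpha> (\<gamma> + \<beta> * real n) \<noteq> \<nu>\<^sup>2"
    and rec1: "\<forall>n. c1 (Suc n) = - c1 n / (Gsum m d \<alpha> (\<gamma> + \<beta> * real (Suc n)) - \<nu>\<^sup>2)"
    and rec2: "\<forall>n. c2 (Suc n) = - (c2 n + c1 (Suc n) * Bsum m d \<alpha> (\<gamma> + \<beta> * real (Suc n)))
                                 / (Gsum m d \<alpha> (\<gamma> + \<beta> * real (Suc n)) - \<nu>\<^sup>2)"
  shows "\<forall>x::real. x > 0 \<longrightarrow>
           summable (\<lambda>n. c1 n * x powr (\<gamma> + \<beta> * real n)) \<and>
           summable (\<lambda>n. c2 n * x powr (\<gamma> + \<beta> * real n))"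
proof -
  \<comment> \<open>Convergence needs only that G is not identically zero; non-resonance merely keeps
     the denominators nonzero, which is irrelevant here since \<open>x / 0 = 0\<close>.\<close>
  have G: "Gsum m d \<alpha> \<noteq> (\<lambda>_. 0)" using d2 by auto
  define g where "g n = \<gamma> + \<beta> * real (Suc n)" for n
  have g: "filterlim g at_top sequentially" unfolding g_def using beta_pos by real_asymp
  define D where "D n = Gsum m d \<alpha> (g n) - \<nu>\<^sup>2" for n
  define B where "B n = Bsum m d \<alpha> (g n)" for n
  have D: "filterlim (\<lambda>n. \<bar>D n\<bar>) at_top sequentially"
    unfolding D_def by (rule filterlim_compose[OF filterlim_abs_Gsum_minus_const[OF alpha_pos G] g])
  obtain K where K: "K > 0" "eventually (\<lambda>n. \<bar>B n\<bar> \<le> K * \<bar>D n\<bar>) sequentially"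
    using landau_o.big.compose[OF Bsum_bigo_Gsum_minus_const[OF alpha_pos G, of "\<nu>\<^sup>2"] g]
    unfolding B_def D_def by (elim landau_o.bigE) auto
  have c1: "summable (\<lambda>n. \<bar>c1 n\<bar> * q ^ n)" if "q > 0" for q
    by (rule summable_power_series_of_recursion[OF D that, of "\<lambda>_. 0"])
       (auto simp: rec1 D_def g_def abs_divide)
  have c2: "summable (\<lambda>n. \<bar>c2 n\<bar> * q ^ n)" if "q > 0" for q
  proof (rule summable_power_series_of_recursion[OF D that, of "\<lambda>n. K * \<bar>c1 (Suc n)\<bar>"])
    show "summable (\<lambda>n. K * \<bar>c1 (Suc n)\<bar> * q ^ Suc n)"
      using summable_mult[OF c1[OF that], of K] by (subst summable_Suc_iff) (simp add: mult.assoc)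
    have c2_Suc: "\<bar>c2 (Suc n)\<bar> = \<bar>(c2 n + c1 (Suc n) * B n) / D n\<bar>" for n
      unfolding rec2[rule_format] D_def B_def g_def by (simp only: minus_divide_left abs_minus_cancel)
    show "eventually (\<lambda>n. \<bar>c2 (Suc n)\<bar> \<le> \<bar>c2 n\<bar> / \<bar>D n\<bar> + K * \<bar>c1 (Suc n)\<bar>) sequentially"
      using K(2) by eventually_elim (use K(1) c2_Suc abs_add_mult_divide_le in simp)
  qed (use K in auto)
  show ?thesis
    using c1 c2 by (auto intro: summable_powr_series_of_abs)
qed

end
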